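(* Let $f\colon X\to X$ be a homeomorphism of a compact metric space $(X,d)$ with the shadowing property. For every $\epsilon>0$ there is $\delta>0$ such that: if $x\in\Omega(f)$, $y\in X$ and $n>0$ satisfy $\epsilon<\gamma:=\max\{d(f^k(x),f^k(y)):0\le k<n\}$ and $\max\{d(x,y),d(f^n(x),f^n(y))\}<\delta$, then there exist $N\ge1$ and a compact set $K\subset X$ with $\sup_{k\in\mathbb{Z}}\operatorname{diam}(f^k(K))\le2\gamma$, $f^N(K)=K$, and $f^N|_K$ semi-conjugate to the full shift on two symbols. In particular $K$ is uncountable and the topological entropy of $f^N|_K$ is at least $\log 2$.
   Context: Shadowing: for every $\varepsilon>0$ there is $\delta>0$ such that for every sequence $(x_k)_{k\in\mathbb{Z}}$ with $d(f(x_k),x_{k+1})<\delta$ for all $k$ there is $y$ with $d(f^k(y),x_k)<\varepsilon$ for all $k\in\mathbb{Z}$. $\Omega(f)$ is the set of non-wandering points: $x$ such that for every open $U\ni x$ there is $k>0$ with $f^k(U)\cap U\ne\emptyset$. $g\colon K\to K$ is semi-conjugate to the full shift $\sigma$ on $\{0,1\}^{\mathbb{Z}}$ if there is a continuous surjection $h\colon K\to\{0,1\}^{\mathbb{Z}}$ with $h\circ g=\sigma\circ h$. *)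

theory Defs
  imports "HOL-Analysis.Analysis"
begin

definition zpow :: "('a \<Rightarrow> 'a) \<Rightarrow> ('a \<Rightarrow> 'a) \<Rightarrow> int \<Rightarrow> 'a \<Rightarrow> 'a" where
  "zpow f g k = (if 0 \<le> k then f ^^ nat k else g ^^ nat (- k))"

definition shadowing :: "'a::metric_space set \<Rightarrow> ('a \<Rightarrow> 'a) \<Rightarrow> ('a \<Rightarrow> 'a) \<Rightarrow> bool" where
  "shadowing X f g \<longleftrightarrow>
     (\<forall>e>0. \<exists>d>0. \<forall>xs :: int \<Rightarrow> 'a.
        (\<forall>k. xs k \<in> X) \<and> (\<forall>k. dist (f (xs k)) (xs (k + 1)) < d) \<longrightarrow>
        (\<exists>y\<in>X. \<forall>k. dist (zpow f g k y) (xs k) < e))"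

definition nonwandering :: "'a::metric_space set \<Rightarrow> ('a \<Rightarrow> 'a) \<Rightarrow> 'a set" where
  "nonwandering X f = {x \<in> X. \<forall>U. openin (top_of_set X) U \<and> x \<in> U \<longrightarrow>
                                 (\<exists>k>0. (f ^^ k) ` U \<inter> U \<noteq> {})}"

definition shift_top :: "(int \<Rightarrow> bool) topology" where
  "shift_top = product_topology (\<lambda>_. discrete_topology (UNIV :: bool set)) UNIV"

definition full_shift :: "(int \<Rightarrow> bool) \<Rightarrow> (int \<Rightarrow> bool)" where
  "full_shift s = (\<lambda>k. s (k + 1))"

definition semiconj_full_shift :: "('a::metric_space \<Rightarrow> 'a) \<Rightarrow> 'a set \<Rightarrow> bool" where
  "semiconj_full_shift T K \<longleftrightarrow>
     (\<exists>h. continuous_map (top_of_set K) shift_top h \<and> h ` K = topspace shift_top \<and>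
          (\<forall>y\<in>K. h (T y) = full_shift (h y)))"

definition separated :: "('a::metric_space \<Rightarrow> 'a) \<Rightarrow> 'a set \<Rightarrow> nat \<Rightarrow> real \<Rightarrow> 'a set \<Rightarrow> bool" where
  "separated T K n e E \<longleftrightarrow> E \<subseteq> K \<and>
     (\<forall>x\<in>E. \<forall>y\<in>E. x \<noteq> y \<longrightarrow> (\<exists>k<n. dist ((T ^^ k) x) ((T ^^ k) y) > e))"

definition max_sep :: "('a::metric_space \<Rightarrow> 'a) \<Rightarrow> 'a set \<Rightarrow> nat \<Rightarrow> real \<Rightarrow> real" where
  "max_sep T K n e = Sup {real (card E) | E. finite E \<and> separated T K n e E}"

definition top_entropy :: "('a::metric_space \<Rightarrow> 'a) \<Rightarrow> 'a set \<Rightarrow> ereal" where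
  "top_entropy T K = (SUP e\<in>{0<..}. limsup (\<lambda>n. ereal (ln (max_sep T K n e) / real n)))"

end

theory Submission
  imports Defs
begin

(*
  A nonwandering point x is reached from f^n x by a delta-pseudo-orbit: follow a nearby orbit
  that returns close to x. Prefixing this return chain with the orbit segments of x and of y
  gives two pseudo-periodic words of a common length N, and since x and y are delta-close every
  bi-infinite concatenation of the two words is a pseudo-orbit, hence traced by a true orbit.
  The points whose orbit stays, on every block of length N, within epsilon/4 of one of the words
  form a compact f^N-invariant set K. The words are more than epsilon apart at some time, so each
  block determines its word, and the resulting word sequence semi-conjugates f^N on K onto the
  full shift. Uncountability and entropy at least log 2 hold for any system semi-conjugate to
  the full shift.
*)

lemma funpow_in_invariant: "f ` X \<subseteq> X \<Longrightarrow> z \<in> X \<Longrightarrow> (f ^^ m) z \<in> X"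
  by (induction m) auto

lemma continuous_on_funpow:
  assumes "f ` X \<subseteq> X" "continuous_on X f"
  shows "continuous_on X (f ^^ m)"
proof (induction m)
  case (Suc m)
  have "continuous_on X (f \<circ> (f ^^ m))"
    using Suc assms funpow_in_invariant[OF assms(1)]
    by (intro continuous_on_compose) (auto intro: continuous_on_subset)
  then show ?case by (simp add: o_def)
qed (simp add: continuous_on_id)

lemma compact_orbit_segments_close:
  assumes "compact X" "f ` X \<subseteq> X" "continuous_on X f" "e > 0"
  shows "\<exists>\<rho>>0. \<forall>a\<in>X. \<forall>b\<in>X. dist a b < \<rho> \<longrightarrow> (\<forall>k<n. dist ((f ^^ k) a) ((f ^^ k) b) < e)"
proof (induction n)
  case 0 then show ?case by (auto intro: exI[of _ 1])
next
  case (Suc n)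
  then obtain \<rho>1 where \<rho>1: "\<rho>1 > 0"
    "\<forall>a\<in>X. \<forall>b\<in>X. dist a b < \<rho>1 \<longrightarrow> (\<forall>k<n. dist ((f ^^ k) a) ((f ^^ k) b) < e)"
    by blast
  have "uniformly_continuous_on X (f ^^ n)"
    using compact_uniformly_continuous[OF continuous_on_funpow[OF assms(2,3)] assms(1)] .
  then obtain \<rho>2 where \<rho>2: "\<rho>2 > 0"
    "\<forall>a\<in>X. \<forall>b\<in>X. dist a b < \<rho>2 \<longrightarrow> dist ((f ^^ n) a) ((f ^^ n) b) < e"
    unfolding uniformly_continuous_on_def using assms(4) by metis
  show ?case
    using \<rho>1 \<rho>2 less_Suc_eq by (intro exI[of _ "min \<rho>1 \<rho>2"]) auto
qed

lemma compact_disjoint_dist_pos: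
  fixes S T :: "'a::metric_space set"
  assumes "compact S" "compact T" "S \<inter> T = {}"
  shows "\<exists>\<delta>>0. \<forall>x\<in>S. \<forall>y\<in>T. \<delta> \<le> dist x y"
proof (cases "S \<times> T = {}")
  case True
  then show ?thesis by (auto intro: exI[of _ 1])
next
  case False
  have "continuous_on (S \<times> T) (\<lambda>p. dist (fst p) (snd p))"
    by (intro continuous_intros)
  then obtain p where p: "p \<in> S \<times> T" "\<forall>q\<in>S \<times> T. dist (fst p) (snd p) \<le> dist (fst q) (snd q)"
    using continuous_attains_inf[OF compact_Times[OF assms(1,2)] False] by blast
  moreover have "fst p \<noteq> snd p"
    using p(1) assms(3) by (auto simp: mem_Times_iff)
  ultimately show ?thesis
    by (intro exI[of _ "dist (fst p) (snd p)"]) auto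
qed

lemma uncountable_full_shift_space: "uncountable (UNIV :: (int \<Rightarrow> bool) set)"
proof
  assume "countable (UNIV :: (int \<Rightarrow> bool) set)"
  then obtain \<phi> :: "(int \<Rightarrow> bool) \<Rightarrow> nat" where "inj \<phi>"
    by (auto simp: countable_def)
  define s where "s i = (\<not> inv \<phi> (nat i) i)" for i :: int
  have "inv \<phi> (\<phi> s) = s"
    using inv_f_f[OF \<open>inj \<phi>\<close>] .
  then have "s (int (\<phi> s)) = (\<not> s (int (\<phi> s)))"
    by (metis nat_int s_def)
  then show False by simp
qed

lemma continuous_map_to_discrete_bool:
  assumes "closedin (top_of_set K) {z\<in>K. p z}" "closedin (top_of_set K) {z\<in>K. \<not> p z}"
  shows "continuous_map (top_of_set K) (discrete_topology UNIV) p"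
  unfolding continuous_map_def
proof (intro conjI allI impI)
  show "p \<in> topspace (top_of_set K) \<rightarrow> topspace (discrete_topology UNIV)" by simp
  fix U :: "bool set"
  have "openin (top_of_set K) (K - {z\<in>K. p z})" "openin (top_of_set K) (K - {z\<in>K. \<not> p z})"
    using assms by (auto intro!: openin_diff)
  moreover have "{z \<in> topspace (top_of_set K). p z \<in> U} =
      (if True \<in> U then (if False \<in> U then K else K - {z\<in>K. \<not> p z})
       else (if False \<in> U then K - {z\<in>K. p z} else {}))"
    by auto (metis (full_types))+
  ultimately show "openin (top_of_set K) {z \<in> topspace (top_of_set K). p z \<in> U}"
    by auto
qed

lemma separated_card_bdd_above:
  assumes "compact K" "T ` K \<subseteq> K" "continuous_on K T" "e > 0"
  shows "bdd_above {real (card E) | E. finite E \<and> separated T K n e E}"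
proof -
  obtain \<rho> where \<rho>: "\<rho> > 0"
    "\<forall>a\<in>K. \<forall>b\<in>K. dist a b < \<rho> \<longrightarrow> (\<forall>k<n. dist ((T ^^ k) a) ((T ^^ k) b) < e)"
    using compact_orbit_segments_close[OF assms] by blast
  obtain F where F: "finite F" "K \<subseteq> (\<Union>c\<in>F. ball c (\<rho>/2))"
    using seq_compact_imp_totally_bounded[OF compact_imp_seq_compact[OF assms(1)], rule_format,
        of "\<rho>/2"] \<open>\<rho> > 0\<close>
    by auto
  have "card E \<le> card F" if E: "separated T K n e E" for E
  proof -
    have EK: "E \<subseteq> K" using E by (simp add: separated_def)
    have "\<forall>a\<in>E. \<exists>c. c \<in> F \<and> dist c a < \<rho>/2"
      using EK F(2) by fastforce
    then obtain \<phi> where \<phi>: "\<forall>a\<in>E. \<phi> a \<in> F \<and> dist (\<phi> a) a < \<rho>/2"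
      by metis
    have "inj_on \<phi> E"
    proof (rule inj_onI, rule ccontr)
      fix a b assume ab: "a \<in> E" "b \<in> E" "\<phi> a = \<phi> b" "a \<noteq> b"
      have "dist a b \<le> dist (\<phi> a) a + dist (\<phi> a) b" by (rule dist_triangle3)
      also have "\<dots> < \<rho>"
      proof -
        have "dist (\<phi> a) a < \<rho>/2" "dist (\<phi> b) b < \<rho>/2"
          using \<phi> ab(1,2) by auto
        then show ?thesis using ab(3) by simp
      qed
      finally have "\<forall>k<n. dist ((T ^^ k) a) ((T ^^ k) b) < e"
        using \<rho>(2) ab(1,2) EK by blast
      moreover obtain k where "k < n" "dist ((T ^^ k) a) ((T ^^ k) b) > e"
        using E ab unfolding separated_def by blast
      ultimately show False by (meson less_asym)
    qed
    then show ?thesis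
      using \<phi> F(1) by (intro card_inj_on_le) auto
  qed
  then show ?thesis
    by (intro bdd_aboveI[of _ "real (card F)"]) auto
qed

lemma top_entropy_ge_ln2:
  assumes "compact K" "T ` K \<subseteq> K" "continuous_on K T" "e > 0"
    and sep: "\<And>n. \<exists>E. finite E \<and> separated T K n e E \<and> 2 ^ n \<le> card E"
  shows "ereal (ln 2) \<le> top_entropy T K"
proof -
  have max_sep: "2 ^ n \<le> max_sep T K n e" for n
  proof -
    obtain E where "finite E" "separated T K n e E" "2 ^ n \<le> card E"
      using sep by blast
    moreover have "real (card E) \<le> max_sep T K n e"
      unfolding max_sep_def using calculation
      by (intro cSup_upper separated_card_bdd_above[OF assms(1-4)]) auto
    ultimately show ?thesis
      by (metis numeral_power_le_of_nat_cancel_iff order.trans)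
  qed
  have "ln 2 \<le> ln (max_sep T K n e) / real n" if "n \<ge> 1" for n
  proof -
    have "real n * ln 2 = ln (2 ^ n)" by (simp add: ln_realpow)
    also have "\<dots> \<le> ln (max_sep T K n e)" using max_sep[of n] by (intro ln_mono) auto
    finally show ?thesis using that by (simp add: field_simps)
  qed
  then have "ereal (ln 2) \<le> limsup (\<lambda>n. ereal (ln (max_sep T K n e) / real n))"
    by (intro le_Limsup) (auto simp: eventually_sequentially)
  also have "\<dots> \<le> top_entropy T K"
    unfolding top_entropy_def using \<open>e > 0\<close> by (intro SUP_upper) simp
  finally show ?thesis .
qed

lemma semiconj_full_shift_funpow:
  assumes "T ` K \<subseteq> K" "\<forall>y\<in>K. h (T y) = full_shift (h y)" "z \<in> K"
  shows "h ((T ^^ m) z) = (\<lambda>j. h z (j + int m))"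
proof (induction m)
  case (Suc m)
  have "(T ^^ m) z \<in> K"
    using funpow_in_invariant[OF assms(1,3)] .
  then show ?case
    using Suc assms(2) by (simp add: full_shift_def algebra_simps)
qed simp

lemma uncountable_if_semiconj_full_shift:
  assumes "semiconj_full_shift T K"
  shows "uncountable K"
proof
  assume "countable K"
  obtain h where "h ` K = topspace shift_top"
    using assms by (auto simp: semiconj_full_shift_def)
  then have "h ` K = UNIV"
    by (simp add: shift_top_def PiE_UNIV_domain)
  then show False
    using countable_image[OF \<open>countable K\<close>, of h] uncountable_full_shift_space by simp
qed

lemma shift_cylinders_apart:
  assumes "compact K" "continuous_map (top_of_set K) shift_top h"
  obtains \<rho> where "\<rho> > 0" "\<And>z w. z \<in> K \<Longrightarrow> w \<in> K \<Longrightarrow> h z 0 \<noteq> h w 0 \<Longrightarrow> \<rho> \<le> dist z w"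
proof -
  have "continuous_map (top_of_set K) (discrete_topology UNIV) (\<lambda>z. h z 0)"
    using assms(2) by (simp add: shift_top_def continuous_map_componentwise_UNIV)
  then have "closedin (top_of_set K) {z \<in> topspace (top_of_set K). h z 0 \<in> {b}}" for b
    by (rule closedin_continuous_map_preimage) simp
  then have compact_level: "compact {z\<in>K. h z 0 = b}" for b
    using closedin_compact[OF assms(1)] by simp
  obtain \<rho> where "\<rho> > 0" and \<rho>: "\<forall>z\<in>{z\<in>K. h z 0}. \<forall>w\<in>{z\<in>K. \<not> h z 0}. \<rho> \<le> dist z w"
    using compact_disjoint_dist_pos[OF compact_level[of True, simplified]
        compact_level[of False, simplified]]
    by auto
  then have "\<rho> \<le> dist z w" if "z \<in> K" "w \<in> K" "h z 0 \<noteq> h w 0" for z w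
    using that by (cases "h z 0") (auto simp: dist_commute)
  with \<open>\<rho> > 0\<close> show thesis by (rule that)
qed

lemma semiconj_full_shift_separated_sets:
  assumes "compact K" "T ` K \<subseteq> K" "semiconj_full_shift T K"
  obtains e where "e > 0" "\<And>n. \<exists>E. finite E \<and> separated T K n e E \<and> 2 ^ n \<le> card E"
proof -
  obtain h where cont: "continuous_map (top_of_set K) shift_top h"
    and onto: "h ` K = UNIV" and semiconj: "\<forall>y\<in>K. h (T y) = full_shift (h y)"
    using assms(3) by (auto simp: semiconj_full_shift_def shift_top_def PiE_UNIV_domain)
  obtain \<rho> where "\<rho> > 0" and apart: "\<And>z w. z \<in> K \<Longrightarrow> w \<in> K \<Longrightarrow> h z 0 \<noteq> h w 0 \<Longrightarrow> \<rho> \<le> dist z w"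
    using shift_cylinders_apart[OF assms(1) cont] by blast
  have "\<forall>s. \<exists>z. z \<in> K \<and> h z = s"
    using onto by (metis UNIV_I imageE)
  then obtain sel where sel: "\<And>s. sel s \<in> K" "\<And>s. h (sel s) = s"
    by metis
  define code where "code S = sel (\<lambda>j. j \<in> int ` S)" for S :: "nat set"
  have digit: "h ((T ^^ m) (code S)) 0 \<longleftrightarrow> m \<in> S" for m S
    using semiconj_full_shift_funpow[OF assms(2) semiconj sel(1)] sel(2)
    by (simp add: code_def image_iff)
  have "inj code"
    by (rule injI, rule set_eqI) (metis digit)
  have far: "\<rho> \<le> dist ((T ^^ m) (code S)) ((T ^^ m) (code S'))" if "(m \<in> S) \<noteq> (m \<in> S')" for m S S'
    using that digit sel(1) by (intro apart funpow_in_invariant[OF assms(2)]) (auto simp: code_def)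
  have code_separated: "separated T K n (\<rho>/2) (code ` Pow {..<n})" for n
    unfolding separated_def
  proof (intro conjI ballI impI)
    show "code ` Pow {..<n} \<subseteq> K" using sel(1) by (auto simp: code_def)
    fix x y assume "x \<in> code ` Pow {..<n}" "y \<in> code ` Pow {..<n}" "x \<noteq> y"
    then obtain S S' where S: "S \<subseteq> {..<n}" "S' \<subseteq> {..<n}" "x = code S" "y = code S'" "S \<noteq> S'"
      by auto
    then obtain m where m: "(m \<in> S) \<noteq> (m \<in> S')"
      by blast
    then have "m < n" using S(1,2) by auto
    moreover have "\<rho> \<le> dist ((T ^^ m) x) ((T ^^ m) y)"
      using far[OF m] S(3,4) by simp
    ultimately show "\<exists>k<n. \<rho>/2 < dist ((T ^^ k) x) ((T ^^ k) y)"
      using \<open>\<rho> > 0\<close> by (intro exI[of _ m]) auto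
  qed
  have card: "card (code ` Pow {..<n}) = 2 ^ n" for n
    using \<open>inj code\<close> by (simp add: card_image inj_on_subset card_Pow)
  show thesis
  proof (rule that[of "\<rho>/2"])
    show "\<rho>/2 > 0" using \<open>\<rho> > 0\<close> by simp
    show "\<exists>E. finite E \<and> separated T K n (\<rho>/2) E \<and> 2 ^ n \<le> card E" for n
      using code_separated[of n] card[of n] by (intro exI[of _ "code ` Pow {..<n}"]) auto
  qed
qed

lemma top_entropy_semiconj_full_shift:
  assumes "compact K" "T ` K \<subseteq> K" "continuous_on K T" "semiconj_full_shift T K"
  shows "ereal (ln 2) \<le> top_entropy T K"
  using semiconj_full_shift_separated_sets[OF assms(1,2,4)] top_entropy_ge_ln2[OF assms(1-3)] by metis

definition pseudo_chain :: "'a::metric_space set \<Rightarrow> ('a \<Rightarrow> 'a) \<Rightarrow> real \<Rightarrow> nat \<Rightarrow> (nat \<Rightarrow> 'a) \<Rightarrow> bool"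
  where "pseudo_chain X f d m c \<longleftrightarrow> (\<forall>i\<le>m. c i \<in> X) \<and> (\<forall>i<m. dist (f (c i)) (c (Suc i)) < d)"

lemma pseudo_chain_mono:
  "pseudo_chain X f d m c \<Longrightarrow> d \<le> d' \<Longrightarrow> m' \<le> m \<Longrightarrow> pseudo_chain X f d' m' c"
  unfolding pseudo_chain_def by (meson le_trans less_le_trans order.strict_trans2)

lemma funpow_periodic: "(f ^^ p) x = x \<Longrightarrow> (f ^^ (p * q)) x = x"
  by (induction q) (auto simp: funpow_add)

lemma periodic_return_chain:
  assumes "f ` X \<subseteq> X" "x \<in> X" "(f ^^ p) x = x" "p \<ge> 1" "d > 0"
  shows "\<exists>m\<ge>1. \<exists>c. c 0 = (f ^^ n) x \<and> c m = x \<and> pseudo_chain X f d m c"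
proof -
  define m where "m = p * (n + 1) - n"
  have "n + 1 \<le> p * (n + 1)" using assms(4) mult_le_mono1[of 1 p "n + 1"] by simp
  then have "n + m = (n + 1) * p" and "m \<ge> 1" by (simp_all add: m_def)
  then show ?thesis
    using funpow_periodic[OF assms(3), of "n + 1"] funpow_in_invariant[OF assms(1,2)] assms(5)
    by (intro exI[of _ m] conjI exI[of _ "\<lambda>i. (f ^^ (n + i)) x"])
      (auto simp: pseudo_chain_def mult.commute)
qed

lemma no_short_return_nbhd:
  assumes "compact X" "f ` X \<subseteq> X" "continuous_on X f" "x \<in> X"
    and aperiodic: "\<forall>p\<in>{1..n}. (f ^^ p) x \<noteq> x"
  shows "\<exists>r>0. \<forall>u\<in>X. dist u x < r \<longrightarrow> (\<forall>p\<in>{1..n}. r \<le> dist ((f ^^ p) u) x)"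
proof (cases "n = 0")
  case True
  then show ?thesis by (auto intro: exI[of _ 1])
next
  case False
  define D where "D = Min ((\<lambda>p. dist ((f ^^ p) x) x) ` {1..n})"
  have "D > 0"
    unfolding D_def using aperiodic False by (subst Min_gr_iff) auto
  have D_le: "D \<le> dist ((f ^^ p) x) x" if "p \<in> {1..n}" for p
    unfolding D_def using that by (intro Min_le) auto
  obtain \<rho> where "\<rho> > 0" and \<rho>:
    "\<forall>a\<in>X. \<forall>b\<in>X. dist a b < \<rho> \<longrightarrow> (\<forall>k<n+1. dist ((f ^^ k) a) ((f ^^ k) b) < D/2)"
    using compact_orbit_segments_close[OF assms(1-3)] \<open>D > 0\<close> half_gt_zero by blast
  have "min \<rho> (D/2) \<le> dist ((f ^^ p) u) x"
    if "u \<in> X" "dist u x < min \<rho> (D/2)" "p \<in> {1..n}" for u p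
  proof -
    have "dist ((f ^^ p) u) ((f ^^ p) x) < D/2"
      using \<rho> that assms(4) by auto
    moreover have "dist ((f ^^ p) x) x \<le> dist ((f ^^ p) x) ((f ^^ p) u) + dist ((f ^^ p) u) x"
      by (rule dist_triangle)
    ultimately show ?thesis
      using D_le[OF that(3)] by (simp add: dist_commute)
  qed
  then show ?thesis
    using \<open>\<rho> > 0\<close> \<open>D > 0\<close> by (intro exI[of _ "min \<rho> (D/2)"]) auto
qed

lemma return_pseudo_chain:
  assumes "f ` X \<subseteq> X" "x \<in> X" "u \<in> X" "m \<ge> 2"
    and "dist ((f ^^ Suc n) x) ((f ^^ Suc n) u) < d" "dist ((f ^^ (n + m)) u) x < d"
  shows "pseudo_chain X f d m (\<lambda>i. if i = 0 then (f ^^ n) x else if i = m then x else (f ^^ (n + i)) u)"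
  unfolding pseudo_chain_def
proof (intro conjI allI impI)
  show "(if i = 0 then (f ^^ n) x else if i = m then x else (f ^^ (n + i)) u) \<in> X" for i
    using funpow_in_invariant[OF assms(1)] assms(2,3) by auto
  fix i assume "i < m"
  then consider "i = 0" | "0 < i" "Suc i < m" | "0 < i" "Suc i = m"
    using assms(4) by linarith
  then show "dist (f (if i = 0 then (f ^^ n) x else if i = m then x else (f ^^ (n + i)) u))
      (if Suc i = 0 then (f ^^ n) x else if Suc i = m then x else (f ^^ (n + Suc i)) u) < d"
  proof cases
    case 1
    then show ?thesis using assms(4,5) by simp
  next
    case 2
    then show ?thesis using assms(5) by (auto intro: le_less_trans[OF zero_le_dist])
  next
    case 3
    then have "(f ^^ (n + m)) u = f ((f ^^ (n + i)) u)" by auto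
    then show ?thesis using 3 assms(6) by simp
  qed
qed

lemma nonwandering_late_return:
  assumes "compact X" "f ` X \<subseteq> X" "continuous_on X f" "x \<in> nonwandering X f" "r > 0"
    and aperiodic: "\<forall>p\<in>{1..n}. (f ^^ p) x \<noteq> x"
  obtains u k where "u \<in> X" "k > n" "dist x u < r" "dist x ((f ^^ k) u) < r"
proof -
  have "x \<in> X" using assms(4) by (simp add: nonwandering_def)
  obtain r1 where "r1 > 0"
    and r1: "\<forall>u\<in>X. dist u x < r1 \<longrightarrow> (\<forall>p\<in>{1..n}. r1 \<le> dist ((f ^^ p) u) x)"
    using no_short_return_nbhd[OF assms(1-3) \<open>x \<in> X\<close> aperiodic] by blast
  define r' where "r' = min r r1"
  have "openin (top_of_set X) (X \<inter> ball x r')" "x \<in> X \<inter> ball x r'"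
    using \<open>x \<in> X\<close> \<open>r1 > 0\<close> \<open>r > 0\<close> by (auto simp: r'_def openin_open_Int)
  then obtain k where "k > 0" "(f ^^ k) ` (X \<inter> ball x r') \<inter> (X \<inter> ball x r') \<noteq> {}"
    using assms(4) unfolding nonwandering_def by blast
  then obtain u where u: "u \<in> X" "dist x u < r'" "dist x ((f ^^ k) u) < r'"
    by auto
  have "k > n"
  proof (rule ccontr)
    assume "\<not> k > n"
    then have "r1 \<le> dist ((f ^^ k) u) x"
      using r1 u \<open>k > 0\<close> by (simp add: r'_def dist_commute)
    then show False using u(3) by (simp add: r'_def dist_commute)
  qed
  with u show thesis by (intro that) (auto simp: r'_def)
qed

lemma nonwandering_return_chain:
  assumes "compact X" "f ` X \<subseteq> X" "continuous_on X f" "x \<in> nonwandering X f" "d > 0"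
  shows "\<exists>m\<ge>1. \<exists>c. c 0 = (f ^^ n) x \<and> c m = x \<and> pseudo_chain X f d m c"
proof -
  have "x \<in> X" using assms(4) by (simp add: nonwandering_def)
  \<comment> \<open>Ruling out periods up to n + 1 (not just n) forces a return time k > n + 1, so the
    chain through the returning orbit has length at least 2.\<close>
  show ?thesis
  proof (cases "\<exists>p\<in>{1..n+1}. (f ^^ p) x = x")
    case True
    then show ?thesis
      using periodic_return_chain[OF assms(2) \<open>x \<in> X\<close> _ _ assms(5)] by auto
  next
    case False
    obtain \<rho> where "\<rho> > 0"
      and \<rho>: "\<forall>a\<in>X. \<forall>b\<in>X. dist a b < \<rho> \<longrightarrow> (\<forall>k<n+2. dist ((f ^^ k) a) ((f ^^ k) b) < d)"
      using compact_orbit_segments_close[OF assms(1-3,5)] by blast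
    have aperiodic: "\<forall>p\<in>{1..n+1}. (f ^^ p) x \<noteq> x" using False by blast
    obtain u k where "u \<in> X" "k > n + 1" "dist x u < min \<rho> d" "dist x ((f ^^ k) u) < min \<rho> d"
      by (rule nonwandering_late_return[where r = "min \<rho> d", OF assms(1-4) _ aperiodic])
        (use \<open>\<rho> > 0\<close> assms(5) in auto)
    define m where "m = k - n"
    have "m \<ge> 2" "n + m = k" using \<open>k > n + 1\<close> by (simp_all add: m_def)
    moreover have "dist ((f ^^ Suc n) x) ((f ^^ Suc n) u) < d"
      using \<rho>[rule_format, OF \<open>x \<in> X\<close> \<open>u \<in> X\<close>, of "Suc n"] \<open>dist x u < min \<rho> d\<close> by simp
    moreover have "dist ((f ^^ k) u) x < d"
      using \<open>dist x ((f ^^ k) u) < min \<rho> d\<close> by (simp add: dist_commute)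
    ultimately have "pseudo_chain X f d m
        (\<lambda>i. if i = 0 then (f ^^ n) x else if i = m then x else (f ^^ (n + i)) u)"
      by (intro return_pseudo_chain[OF assms(2) \<open>x \<in> X\<close> \<open>u \<in> X\<close>]) auto
    then show ?thesis
      using \<open>m \<ge> 2\<close> by (intro exI[of _ m] conjI exI) auto
  qed
qed

definition orbit_then :: "('a \<Rightarrow> 'a) \<Rightarrow> 'a \<Rightarrow> nat \<Rightarrow> (nat \<Rightarrow> 'a) \<Rightarrow> nat \<Rightarrow> 'a"
  where "orbit_then f p n c i = (if i < n then (f ^^ i) p else c (i - n))"

lemma pseudo_chain_orbit_then:
  assumes "f ` X \<subseteq> X" "p \<in> X" "pseudo_chain X f d m c" "dist ((f ^^ n) p) (c 0) < d"
  shows "pseudo_chain X f d (n + m) (orbit_then f p n c)"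
  unfolding pseudo_chain_def
proof (intro conjI allI impI)
  show "orbit_then f p n c i \<in> X" if "i \<le> n + m" for i
    using that assms(3) funpow_in_invariant[OF assms(1,2)] by (auto simp: orbit_then_def pseudo_chain_def)
  fix i assume "i < n + m"
  consider "Suc i < n" | "Suc i = n" | "n \<le> i" by linarith
  then show "dist (f (orbit_then f p n c i)) (orbit_then f p n c (Suc i)) < d"
  proof cases
    case 1
    then show ?thesis using assms(4) by (auto simp: orbit_then_def intro: le_less_trans[OF zero_le_dist])
  next
    case 2
    then show ?thesis using assms(4) by (auto simp: orbit_then_def simp flip: 2)
  next
    case 3
    then have "Suc i - n = Suc (i - n)" "i - n < m" using \<open>i < n + m\<close> by auto
    then show ?thesis using 3 assms(3) by (simp add: orbit_then_def pseudo_chain_def)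
  qed
qed

lemma return_words_pseudo_periodic:
  assumes "f ` X \<subseteq> X" "x \<in> X" "y \<in> X" "n > 0" "m \<ge> 1"
    and chain: "c 0 = (f ^^ n) x" "c m = x" "pseudo_chain X f (d/2) m c"
    and close: "dist x y < d/2" "dist ((f ^^ n) x) ((f ^^ n) y) < d/2"
  defines "W b \<equiv> orbit_then f (if b then y else x) n c"
  shows "pseudo_chain X f d (n + m - 1) (W b)" "dist (f (W b (n + m - 1))) (W b' 0) < d"
proof -
  have "d/2 > 0" using close(1) zero_le_dist[of x y] by linarith
  have W_chain: "pseudo_chain X f (d/2) (n + m) (W b)"
    unfolding W_def using chain(1) \<open>d/2 > 0\<close> close(2) assms(2,3)
    by (intro pseudo_chain_orbit_then[OF assms(1) _ chain(3)]) (auto simp: dist_commute)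
  then show "pseudo_chain X f d (n + m - 1) (W b)"
    by (rule pseudo_chain_mono) (use \<open>d/2 > 0\<close> in auto)
  have "Suc (n + m - 1) = n + m" "n + m - 1 < n + m" "W b (n + m) = x"
    using chain(2) assms(5) by (auto simp: W_def orbit_then_def)
  then have "dist (f (W b (n + m - 1))) x < d/2"
    using W_chain unfolding pseudo_chain_def by metis
  moreover have "dist x (W b' 0) < d/2"
    using close(1) \<open>d/2 > 0\<close> assms(4) by (simp add: W_def orbit_then_def)
  ultimately show "dist (f (W b (n + m - 1))) (W b' 0) < d"
    using dist_triangle[of "f (W b (n + m - 1))" "W b' 0" x] by linarith
qed

definition concat_blocks :: "nat \<Rightarrow> ('b \<Rightarrow> nat \<Rightarrow> 'a) \<Rightarrow> (int \<Rightarrow> 'b) \<Rightarrow> int \<Rightarrow> 'a"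
  where "concat_blocks N W s t = W (s (t div int N)) (nat (t mod int N))"

lemma concat_blocks_block:
  "i < N \<Longrightarrow> concat_blocks N W s (j * int N + int i) = W (s j) i"
  by (simp add: concat_blocks_def)

lemma int_block_decomp:
  assumes "N > 0"
  obtains j i where "i < N" "t = j * int N + int i"
proof
  show "nat (t mod int N) < N" using assms by (simp add: nat_less_iff)
  show "t = (t div int N) * int N + int (nat (t mod int N))" using assms by simp
qed

lemma pseudo_orbit_concat_blocks:
  assumes "N > 0" "\<And>b. pseudo_chain X f d (N - 1) (W b)"
    and wrap: "\<And>b b'. dist (f (W b (N - 1))) (W b' 0) < d"
  shows "concat_blocks N W s t \<in> X" "dist (f (concat_blocks N W s t)) (concat_blocks N W s (t + 1)) < d"
proof -
  obtain j i where i: "i < N" and t: "t = j * int N + int i"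
    using int_block_decomp[OF assms(1)] .
  then show "concat_blocks N W s t \<in> X"
    using assms(2) by (simp add: concat_blocks_block pseudo_chain_def)
  show "dist (f (concat_blocks N W s t)) (concat_blocks N W s (t + 1)) < d"
  proof (cases "Suc i < N")
    case True
    then have "t + 1 = j * int N + int (Suc i)" using t by simp
    then have "concat_blocks N W s (t + 1) = W (s j) (Suc i)"
      using True by (simp only: concat_blocks_block)
    moreover have "concat_blocks N W s t = W (s j) i"
      using t i by (simp only: concat_blocks_block)
    ultimately show ?thesis
      using True assms(2)[of "s j"] by (simp add: pseudo_chain_def)
  next
    case False
    then have "i = N - 1" using i by simp
    then have "t + 1 = (j + 1) * int N + int 0" using t assms(1) by (simp add: algebra_simps of_nat_diff)
    then have "concat_blocks N W s (t + 1) = W (s (j + 1)) 0"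
      using assms(1) by (simp only: concat_blocks_block)
    moreover have "concat_blocks N W s t = W (s j) (N - 1)"
      using t i \<open>i = N - 1\<close> by (simp only: concat_blocks_block)
    ultimately show ?thesis using wrap by simp
  qed
qed

lemma shadowing_traces_concatenations:
  assumes "N > 0" "\<And>b. pseudo_chain X f d (N - 1) (W b)"
    and wrap: "\<And>b b'. dist (f (W b (N - 1))) (W b' 0) < d"
    and shadow: "\<And>xs. (\<forall>k. xs k \<in> X) \<Longrightarrow> (\<forall>k. dist (f (xs k)) (xs (k + 1)) < d) \<Longrightarrow>
      \<exists>z\<in>X. \<forall>k. dist (T k z) (xs k) < e"
  shows "\<exists>z\<in>X. \<forall>j. \<forall>i<N. dist (T (j * int N + int i) z) (W (s j) i) \<le> e"
proof -
  have "\<forall>k. concat_blocks N W s k \<in> X"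
    and "\<forall>k. dist (f (concat_blocks N W s k)) (concat_blocks N W s (k + 1)) < d"
    using pseudo_orbit_concat_blocks[of N X f d W, OF assms(1,2) wrap] by blast+
  then obtain z where "z \<in> X" and z: "\<forall>k. dist (T k z) (concat_blocks N W s k) < e"
    using shadow by blast
  show ?thesis
  proof (intro bexI[OF _ \<open>z \<in> X\<close>] allI impI)
    fix j i assume "i < N"
    then show "dist (T (j * int N + int i) z) (W (s j) i) \<le> e"
      using z[rule_format, of "j * int N + int i"] by (simp add: concat_blocks_block)
  qed
qed

locale homeo_system =
  fixes X :: "'a::metric_space set" and f g :: "'a \<Rightarrow> 'a"
  assumes homeo: "homeomorphism X X f g"
begin

lemma f_image: "f ` X \<subseteq> X" and g_image: "g ` X \<subseteq> X"
  and g_f: "\<And>z. z \<in> X \<Longrightarrow> g (f z) = z" and f_g: "\<And>z. z \<in> X \<Longrightarrow> f (g z) = z"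
  and continuous_f: "continuous_on X f" and continuous_g: "continuous_on X g"
  using homeo by (auto simp: homeomorphism_def)

lemma zpow_in: "z \<in> X \<Longrightarrow> zpow f g k z \<in> X"
  using funpow_in_invariant[OF f_image] funpow_in_invariant[OF g_image] by (simp add: zpow_def)

lemma continuous_on_zpow: "continuous_on X (zpow f g k)"
  using continuous_on_funpow[OF f_image continuous_f] continuous_on_funpow[OF g_image continuous_g]
  by (simp add: zpow_def)

lemma zpow_of_nat: "zpow f g (int m) = f ^^ m"
  by (simp add: zpow_def)

lemma zpow_plus1: "z \<in> X \<Longrightarrow> zpow f g (k + 1) z = f (zpow f g k z)"
proof (cases "k \<ge> 0")
  case True
  then have "nat (k + 1) = Suc (nat k)" by simp
  with True show ?thesis by (simp add: zpow_def)
next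
  case False
  assume "z \<in> X"
  show ?thesis
  proof (cases "k = -1")
    case True
    then show ?thesis using \<open>z \<in> X\<close> f_g by (simp add: zpow_def)
  next
    case k: False
    then have "nat (- k) = Suc (nat (- (k + 1)))" using False by simp
    moreover have "(g ^^ nat (- (k + 1))) z \<in> X"
      using funpow_in_invariant[OF g_image \<open>z \<in> X\<close>] .
    ultimately show ?thesis using False k f_g by (simp add: zpow_def)
  qed
qed

lemma zpow_minus1: "z \<in> X \<Longrightarrow> zpow f g (k - 1) z = g (zpow f g k z)"
  using zpow_plus1[of z "k - 1"] g_f zpow_in by (metis diff_add_cancel)

lemma zpow_add: "z \<in> X \<Longrightarrow> zpow f g (a + b) z = zpow f g a (zpow f g b z)"
proof (induction a rule: int_induct[where k = 0])
  case base
  then show ?case by (simp add: zpow_def)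
next
  case (step1 i)
  then show ?case using zpow_plus1 zpow_in by (metis add.commute add.left_commute)
next
  case (step2 i)
  then show ?case using zpow_minus1 zpow_in by (metis add.commute diff_add_eq)
qed

end

locale block_horseshoe = homeo_system +
  fixes N :: nat and W :: "bool \<Rightarrow> nat \<Rightarrow> 'a::metric_space" and e :: real
  assumes compact_X: "compact X" and N_pos: "0 < N"
    and traced: "\<And>s. \<exists>z\<in>X. \<forall>j. \<forall>i<N. dist (zpow f g (j * int N + int i) z) (W (s j) i) \<le> e"
    and words_apart: "\<exists>i<N. 2 * e < dist (W False i) (W True i)"
begin

definition tracks :: "bool \<Rightarrow> int \<Rightarrow> 'a \<Rightarrow> bool"
  where "tracks b j z \<longleftrightarrow> (\<forall>i<N. dist (zpow f g (j * int N + int i) z) (W b i) \<le> e)"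

definition horseshoe :: "'a set"
  where "horseshoe = {z \<in> X. \<forall>j. \<exists>b. tracks b j z}"

definition itinerary :: "'a \<Rightarrow> int \<Rightarrow> bool"
  where "itinerary z j = tracks True j z"

lemma tracks_unique:
  assumes "tracks b j z" "tracks b' j z"
  shows "b = b'"
proof (rule ccontr)
  assume "b \<noteq> b'"
  obtain i where "i < N" "2 * e < dist (W False i) (W True i)"
    using words_apart by blast
  moreover have "dist (W b i) (W b' i) \<le> dist (zpow f g (j * int N + int i) z) (W b i)
      + dist (zpow f g (j * int N + int i) z) (W b' i)"
    by (rule dist_triangle3)
  moreover have "dist (W b i) (W b' i) = dist (W False i) (W True i)"
    using \<open>b \<noteq> b'\<close> by (cases b) (auto simp: dist_commute)
  moreover have "dist (zpow f g (j * int N + int i) z) (W b i) \<le> e"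
    and "dist (zpow f g (j * int N + int i) z) (W b' i) \<le> e"
    using assms \<open>i < N\<close> by (auto simp: tracks_def)
  ultimately show False by linarith
qed

lemma tracks_itinerary:
  assumes "z \<in> horseshoe"
  shows "tracks b j z \<longleftrightarrow> itinerary z j = b"
proof -
  obtain b0 where "tracks b0 j z"
    using assms by (auto simp: horseshoe_def)
  then show ?thesis
    unfolding itinerary_def by (metis (full_types) tracks_unique)
qed

lemma horseshoe_subset: "horseshoe \<subseteq> X"
  by (auto simp: horseshoe_def)

lemma closed_tracks: "closed {z \<in> X. tracks b j z}"
proof -
  have "{z \<in> X. tracks b j z} =
      X \<inter> (\<Inter>i\<in>{..<N}. {z \<in> X. dist (zpow f g (j * int N + int i) z) (W b i) \<le> e})"
    using N_pos by (auto simp: tracks_def)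
  moreover have "closed {z \<in> X. dist (zpow f g t z) a \<le> e}" for t a
    using compact_imp_closed[OF compact_X]
    by (intro continuous_on_closed_Collect_le continuous_on_dist continuous_on_zpow continuous_on_const)
  then have "closed (X \<inter> (\<Inter>i\<in>{..<N}. {z \<in> X. dist (zpow f g (j * int N + int i) z) (W b i) \<le> e}))"
    using compact_imp_closed[OF compact_X] by (intro closed_Int closed_INT) auto
  ultimately show ?thesis by simp
qed

lemma compact_horseshoe: "compact horseshoe"
proof -
  have "horseshoe = X \<inter> (\<Inter>j. {z \<in> X. tracks True j z} \<union> {z \<in> X. tracks False j z})"
    by (rule set_eqI) (auto simp: horseshoe_def ex_bool_eq)
  moreover have "closed (X \<inter> (\<Inter>j. {z \<in> X. tracks True j z} \<union> {z \<in> X. tracks False j z}))"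
    using compact_imp_closed[OF compact_X] closed_tracks by (intro closed_Int closed_INT ballI closed_Un)
  ultimately have "closed horseshoe" by simp
  then show ?thesis
    using compact_Int_closed[OF compact_X] horseshoe_subset by (metis Int_absorb1)
qed

lemma tracks_zpow_blocks:
  "z \<in> X \<Longrightarrow> tracks b j (zpow f g (q * int N) z) \<longleftrightarrow> tracks b (j + q) z"
  by (simp add: tracks_def zpow_add[symmetric] algebra_simps)

lemma tracks_funpow_N: "z \<in> X \<Longrightarrow> tracks b j ((f ^^ N) z) \<longleftrightarrow> tracks b (j + 1) z"
  using tracks_zpow_blocks[of z b j 1] by (simp add: zpow_of_nat)

lemma horseshoe_invariant: "(f ^^ N) ` horseshoe = horseshoe"
proof
  show "(f ^^ N) ` horseshoe \<subseteq> horseshoe"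
    using funpow_in_invariant[OF f_image] by (auto simp: horseshoe_def tracks_funpow_N)
  show "horseshoe \<subseteq> (f ^^ N) ` horseshoe"
  proof
    fix z assume "z \<in> horseshoe"
    then have "z \<in> X" using horseshoe_subset by blast
    define w where "w = zpow f g (- int N) z"
    have "tracks b j w \<longleftrightarrow> tracks b (j - 1) z" for b j
      using tracks_zpow_blocks[OF \<open>z \<in> X\<close>, of b j "- 1"] by (simp add: w_def)
    then have "w \<in> horseshoe"
      using \<open>z \<in> horseshoe\<close> zpow_in[OF \<open>z \<in> X\<close>] by (auto simp: horseshoe_def w_def)
    moreover have "(f ^^ N) w = z"
      using zpow_add[OF \<open>z \<in> X\<close>, of "int N" "- int N"] by (simp add: w_def zpow_of_nat zpow_def)
    ultimately show "z \<in> (f ^^ N) ` horseshoe" by force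
  qed
qed

lemma itinerary_shift: "z \<in> X \<Longrightarrow> itinerary ((f ^^ N) z) = full_shift (itinerary z)"
  by (intro ext) (simp add: itinerary_def full_shift_def tracks_funpow_N)

lemma itinerary_onto: "\<exists>z\<in>horseshoe. itinerary z = s"
proof -
  obtain z where "z \<in> X" and z: "\<forall>j. tracks (s j) j z"
    using traced[of s] by (auto simp: tracks_def)
  then have "z \<in> horseshoe" by (auto simp: horseshoe_def)
  moreover have "itinerary z = s"
    using tracks_itinerary[OF \<open>z \<in> horseshoe\<close>] z by auto
  ultimately show ?thesis by blast
qed

lemma continuous_itinerary: "continuous_map (top_of_set horseshoe) shift_top itinerary"
  unfolding shift_top_def continuous_map_componentwise_UNIV
proof
  fix j
  have "{z \<in> horseshoe. itinerary z j = b} = horseshoe \<inter> {z \<in> X. tracks b j z}" for b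
    using tracks_itinerary horseshoe_subset by auto
  then have "closedin (top_of_set horseshoe) {z \<in> horseshoe. itinerary z j = b}" for b
    using closed_tracks by (simp add: closedin_closed_Int)
  from this[of True] this[of False]
  show "continuous_map (top_of_set horseshoe) (discrete_topology UNIV) (\<lambda>z. itinerary z j)"
    by (intro continuous_map_to_discrete_bool) simp_all
qed

lemma semiconj_horseshoe: "semiconj_full_shift (f ^^ N) horseshoe"
  unfolding semiconj_full_shift_def
proof (intro exI[of _ itinerary] conjI)
  have "s \<in> itinerary ` horseshoe" for s
    using itinerary_onto[of s] by force
  then show "itinerary ` horseshoe = topspace shift_top"
    by (auto simp: shift_top_def PiE_UNIV_domain)
qed (use continuous_itinerary itinerary_shift horseshoe_subset in auto)

lemma diameter_horseshoe:
  assumes "\<forall>i<N. dist (W False i) (W True i) \<le> c"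
  shows "diameter (zpow f g k ` horseshoe) \<le> c + 2 * e"
proof -
  obtain j i where "i < N" and k: "k = j * int N + int i"
    using int_block_decomp[OF N_pos] .
  have "0 \<le> c"
    using assms \<open>i < N\<close> zero_le_dist order.trans by blast
  then have words: "dist (W b i) (W b' i) \<le> c" for b b'
    using assms \<open>i < N\<close> by (cases b; cases b') (auto simp: dist_commute)
  have "dist (zpow f g k z) (zpow f g k w) \<le> c + 2 * e"
    if zw: "z \<in> horseshoe" "w \<in> horseshoe" for z w
  proof -
    obtain b b' where "tracks b j z" "tracks b' j w"
      using zw unfolding horseshoe_def by blast
    then have "dist (zpow f g k z) (W b i) \<le> e" "dist (zpow f g k w) (W b' i) \<le> e"
      using \<open>i < N\<close> k by (auto simp: tracks_def)
    moreover have "dist (zpow f g k z) (zpow f g k w)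
        \<le> dist (zpow f g k z) (W b i) + dist (W b i) (W b' i) + dist (W b' i) (zpow f g k w)"
      by (meson dist_triangle order.trans add_right_mono)
    ultimately show ?thesis using words[of b b'] by (simp add: dist_commute)
  qed
  moreover have "horseshoe \<noteq> {}" using itinerary_onto by blast
  ultimately show ?thesis
    by (auto simp: diameter_def intro!: cSUP_least)
qed

end

lemma Max_attained_lessThan:
  fixes a :: "nat \<Rightarrow> 'b::linorder"
  assumes "n > 0"
  obtains i where "i < n" "Max {a k | k. k < n} = a i" "\<And>k. k < n \<Longrightarrow> a k \<le> Max {a k | k. k < n}"
proof -
  have eq: "{a k | k. k < n} = a ` {..<n}" by auto
  have "Max (a ` {..<n}) \<in> a ` {..<n}"
    using assms by (intro Max_in) auto
  then obtain i where "i < n" "Max (a ` {..<n}) = a i" by auto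
  moreover have "a k \<le> Max (a ` {..<n})" if "k < n" for k
    using that by (intro Max_ge) auto
  ultimately show thesis
    by (rule that[unfolded eq])
qed

context homeo_system
begin

lemma horseshoe_from_close_pair:
  assumes "compact X"
    and shadow: "\<And>xs. (\<forall>k. xs k \<in> X) \<Longrightarrow> (\<forall>k. dist (f (xs k)) (xs (k + 1)) < d) \<Longrightarrow>
      \<exists>z\<in>X. \<forall>k. dist (zpow f g k z) (xs k) < e"
    and x: "x \<in> nonwandering X f" and "y \<in> X"
    and close: "dist x y < d/2" "dist ((f ^^ n) x) ((f ^^ n) y) < d/2"
    and apart: "i0 < n" "2 * e < dist ((f ^^ i0) x) ((f ^^ i0) y)"
    and bound: "\<forall>k<n. dist ((f ^^ k) x) ((f ^^ k) y) \<le> \<gamma>"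
  shows "\<exists>N\<ge>1. \<exists>K. K \<subseteq> X \<and> compact K \<and> (\<forall>k. diameter (zpow f g k ` K) \<le> \<gamma> + 2 * e) \<and>
           (f ^^ N) ` K = K \<and> semiconj_full_shift (f ^^ N) K"
proof -
  have "x \<in> X" using x by (simp add: nonwandering_def)
  have "d/2 > 0" using close(1) zero_le_dist[of x y] by linarith
  obtain m c where "m \<ge> 1" "c 0 = (f ^^ n) x" "c m = x" and chain: "pseudo_chain X f (d/2) m c"
    using nonwandering_return_chain[OF assms(1) f_image continuous_f x \<open>d/2 > 0\<close>] by blast
  define N where "N = n + m"
  have "N > 0" using \<open>m \<ge> 1\<close> by (simp add: N_def)
  define W where "W b = orbit_then f (if b then y else x) n c" for b
  have short_chain: "pseudo_chain X f d (N - 1) (W b)"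
    and wrap: "dist (f (W b (N - 1))) (W b' 0) < d" for b b'
    using return_words_pseudo_periodic[OF f_image \<open>x \<in> X\<close> \<open>y \<in> X\<close> _ \<open>m \<ge> 1\<close>
        \<open>c 0 = (f ^^ n) x\<close> \<open>c m = x\<close> chain close] apart(1)
    by (simp_all add: W_def N_def)
  have "\<exists>z\<in>X. \<forall>j. \<forall>i<N. dist (zpow f g (j * int N + int i) z) (W (s j) i) \<le> e" for s
    by (rule shadowing_traces_concatenations[of N X f d W, OF \<open>N > 0\<close> short_chain wrap shadow])
  moreover have "2 * e < dist (W False i0) (W True i0)" "i0 < N"
    using apart by (simp_all add: W_def N_def orbit_then_def)
  ultimately interpret block_horseshoe X f g N W e
    using assms(1) \<open>m \<ge> 1\<close> by unfold_locales (auto simp: N_def)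
  have "0 \<le> \<gamma>"
    using bound[rule_format, OF apart(1)] zero_le_dist[of "(f ^^ i0) x" "(f ^^ i0) y"] by linarith
  then have "\<forall>i<N. dist (W False i) (W True i) \<le> \<gamma>"
    using bound by (auto simp: W_def orbit_then_def)
  then show ?thesis
    using horseshoe_subset compact_horseshoe diameter_horseshoe horseshoe_invariant semiconj_horseshoe
      \<open>m \<ge> 1\<close> by (intro exI[of _ N] conjI exI[of _ horseshoe]) (auto simp: N_def)
qed

lemma horseshoe_near_nonwandering:
  assumes "compact X"
    and shadow: "\<And>xs. (\<forall>k. xs k \<in> X) \<Longrightarrow> (\<forall>k. dist (f (xs k)) (xs (k + 1)) < d) \<Longrightarrow>
      \<exists>z\<in>X. \<forall>k. dist (zpow f g k z) (xs k) < e"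
    and "x \<in> nonwandering X f" "y \<in> X" "n > 0"
    and \<gamma>: "\<gamma> = Max {dist ((f ^^ k) x) ((f ^^ k) y) | k. k < n}" "4 * e < \<gamma>"
    and "max (dist x y) (dist ((f ^^ n) x) ((f ^^ n) y)) < d/2"
  shows "\<exists>N\<ge>1. \<exists>K. K \<subseteq> X \<and> compact K \<and> (\<forall>k. diameter (zpow f g k ` K) \<le> 2 * \<gamma>) \<and>
           (f ^^ N) ` K = K \<and> semiconj_full_shift (f ^^ N) K \<and>
           uncountable K \<and> ereal (ln 2) \<le> top_entropy (f ^^ N) K"
proof -
  obtain i0 where "i0 < n"
    and "Max {dist ((f ^^ k) x) ((f ^^ k) y) | k. k < n} = dist ((f ^^ i0) x) ((f ^^ i0) y)"
    and "\<And>k. k < n \<Longrightarrow> dist ((f ^^ k) x) ((f ^^ k) y) \<le> Max {dist ((f ^^ k) x) ((f ^^ k) y) | k. k < n}"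
    using Max_attained_lessThan[OF \<open>n > 0\<close>, of "\<lambda>k. dist ((f ^^ k) x) ((f ^^ k) y)"] by blast
  then have i0: "\<gamma> = dist ((f ^^ i0) x) ((f ^^ i0) y)"
    and bound: "\<forall>k<n. dist ((f ^^ k) x) ((f ^^ k) y) \<le> \<gamma>"
    using \<gamma>(1) by auto
  have close: "dist x y < d/2" "dist ((f ^^ n) x) ((f ^^ n) y) < d/2"
    using assms(8) by auto
  have "2 * e < \<gamma>"
    using \<gamma>(2) i0 zero_le_dist[of "(f ^^ i0) x" "(f ^^ i0) y"] by linarith
  then obtain N K where "N \<ge> 1" "K \<subseteq> X" "compact K" and diam: "\<forall>k. diameter (zpow f g k ` K) \<le> \<gamma> + 2 * e"
    and invariant: "(f ^^ N) ` K = K" and semiconj: "semiconj_full_shift (f ^^ N) K"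
    using horseshoe_from_close_pair[where d = d and e = e,
        OF assms(1) shadow assms(3,4) close \<open>i0 < n\<close> _ bound]
      i0 by auto
  have "diameter (zpow f g k ` K) \<le> 2 * \<gamma>" for k
    using diam[rule_format, of k] \<open>2 * e < \<gamma>\<close> by linarith
  moreover have "continuous_on K (f ^^ N)"
    using continuous_on_funpow[OF f_image continuous_f] \<open>K \<subseteq> X\<close> by (rule continuous_on_subset)
  ultimately show ?thesis
    using \<open>N \<ge> 1\<close> \<open>K \<subseteq> X\<close> \<open>compact K\<close> invariant semiconj uncountable_if_semiconj_full_shift[OF semiconj]
      top_entropy_semiconj_full_shift[OF \<open>compact K\<close> _ _ semiconj]
    by blast
qed

end

theorem mainTheorem11:
  fixes X :: "'a::metric_space set" and f g :: "'a \<Rightarrow> 'a"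
  assumes "compact X" and "homeomorphism X X f g" and "shadowing X f g"
  shows "\<forall>\<epsilon>>0. \<exists>\<delta>>0. \<forall>x y n \<gamma>.
     x \<in> nonwandering X f \<and> y \<in> X \<and> n > 0 \<and>
     \<gamma> = Max {dist ((f ^^ k) x) ((f ^^ k) y) | k. k < n} \<and> \<epsilon> < \<gamma> \<and>
     max (dist x y) (dist ((f ^^ n) x) ((f ^^ n) y)) < \<delta> \<longrightarrow>
     (\<exists>N\<ge>1. \<exists>K. K \<subseteq> X \<and> compact K \<and>
        (\<forall>k::int. diameter (zpow f g k ` K) \<le> 2 * \<gamma>) \<and>
        (f ^^ N) ` K = K \<and> semiconj_full_shift (f ^^ N) K \<and>
        uncountable K \<and> ereal (ln 2) \<le> top_entropy (f ^^ N) K)"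
proof (intro allI impI)
  fix \<epsilon> :: real assume "\<epsilon> > 0"
  interpret homeo_system X f g using assms(2) by unfold_locales
  obtain d where "d > 0" and shadow: "\<And>xs. (\<forall>k. xs k \<in> X) \<Longrightarrow> (\<forall>k. dist (f (xs k)) (xs (k + 1)) < d) \<Longrightarrow>
      \<exists>z\<in>X. \<forall>k. dist (zpow f g k z) (xs k) < \<epsilon> / 4"
    using assms(3) \<open>\<epsilon> > 0\<close> unfolding shadowing_def by (metis divide_pos_pos zero_less_numeral)
  show "\<exists>\<delta>>0. \<forall>x y n \<gamma>.
     x \<in> nonwandering X f \<and> y \<in> X \<and> n > 0 \<and>
     \<gamma> = Max {dist ((f ^^ k) x) ((f ^^ k) y) | k. k < n} \<and> \<epsilon> < \<gamma> \<and>
     max (dist x y) (dist ((f ^^ n) x) ((f ^^ n) y)) < \<delta> \<longrightarrow>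
     (\<exists>N\<ge>1. \<exists>K. K \<subseteq> X \<and> compact K \<and>
        (\<forall>k::int. diameter (zpow f g k ` K) \<le> 2 * \<gamma>) \<and>
        (f ^^ N) ` K = K \<and> semiconj_full_shift (f ^^ N) K \<and>
        uncountable K \<and> ereal (ln 2) \<le> top_entropy (f ^^ N) K)"
    using horseshoe_near_nonwandering[where d = d and e = "\<epsilon>/4", OF assms(1) shadow] \<open>d > 0\<close>
    by (intro exI[of _ "d/2"]) auto
qed

end
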